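(* Let $\rho$ be the automorphism of $\mathcal A_\theta^{alg}$ with $\rho\cdot U_1=U_2^{-1}$, $\rho\cdot U_2=U_1$, and let $H^0(\mathcal A_\theta^{alg},{}_{\rho}\mathcal A_\theta^{alg\ast})$ be the space of formal series $\varphi=\sum\varphi_{n,m}U_1^nU_2^m$ with $(\rho\cdot a)\varphi=\varphi a$ for all $a\in\mathcal A_\theta^{alg}$. Then every such $\varphi$ is determined by the two coefficients $\varphi_{0,0},\varphi_{0,1}$ (which generate the space), and: if $m+n\equiv0\pmod2$ then $\varphi_{n,m}=\lambda^{\frac{m^2+n^2+2mn}{4}}\varphi_{0,0}$; if $m+n\equiv1\pmod 2$ then $\varphi_{n,m}=\lambda^{\frac{m^2+n^2+2mn-1}{4}}\varphi_{0,1}$.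
   Context: Let $\theta\in\mathbb R\setminus\mathbb Q$, $\lambda=e^{2\pi i\theta}$, $\lambda^s:=e^{2\pi i\theta s}$. $\mathcal A_\theta^{alg}$ is the complex algebra of finite sums $\sum a_{n,m}U_1^nU_2^m$ with $U_1,U_2$ invertible and $U_2U_1=\lambda U_1U_2$; formal series $\sum_{(n,m)\in\mathbb Z^2}\varphi_{n,m}U_1^nU_2^m$ with arbitrary coefficients form an $\mathcal A_\theta^{alg}$-bimodule via left/right multiplication. The automorphism $\rho$ generates the copy of $\mathbb Z_4\subset SL(2,\mathbb Z)$ acting on $\mathcal A_\theta^{alg}$ (the paper denotes it $i$). *)

theory Defs
  imports Complex_Main
begin

text \<open>lam theta s = lambda^s = exp(2 pi i theta s).\<close>
definition lam :: "real \<Rightarrow> real \<Rightarrow> complex" where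
  "lam \<theta> s = cis (2 * pi * \<theta> * s)"

text \<open>Coefficient functions (n,m) -> coefficient of U1^n U2^m.
  Elements of A_theta^alg are those with finite support; formal series are arbitrary.\<close>
type_synonym coeffs = "int \<Rightarrow> int \<Rightarrow> complex"

definition supp2 :: "coeffs \<Rightarrow> (int \<times> int) set" where
  "supp2 a = {(n, m). a n m \<noteq> 0}"

definition is_alg :: "coeffs \<Rightarrow> bool" where
  "is_alg a \<longleftrightarrow> finite (supp2 a)"

text \<open>Left action a * phi, using U1^n U2^m U1^p U2^q = lambda^(m p) U1^(n+p) U2^(m+q).\<close>
definition lmult :: "real \<Rightarrow> coeffs \<Rightarrow> coeffs \<Rightarrow> coeffs" where
  "lmult \<theta> a \<phi> = (\<lambda>N M. \<Sum>(n, m)\<in>supp2 a.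
      a n m * lam \<theta> (of_int (m * (N - n))) * \<phi> (N - n) (M - m))"

definition rmult :: "real \<Rightarrow> coeffs \<Rightarrow> coeffs \<Rightarrow> coeffs" where
  "rmult \<theta> \<phi> a = (\<lambda>N M. \<Sum>(p, q)\<in>supp2 a.
      \<phi> (N - p) (M - q) * a p q * lam \<theta> (of_int ((M - q) * p)))"

text \<open>The automorphism rho with rho U1 = U2^-1, rho U2 = U1:
  rho(U1^n U2^m) = U2^-n U1^m = lambda^(-n m) U1^m U2^-n.\<close>
definition rho :: "real \<Rightarrow> coeffs \<Rightarrow> coeffs" where
  "rho \<theta> a = (\<lambda>p q. lam \<theta> (of_int (q * p)) * a (- q) p)"

definition H0_rho :: "real \<Rightarrow> coeffs set" where
  "H0_rho \<theta> = {\<phi>. \<forall>a. is_alg a \<longrightarrow> lmult \<theta> (rho \<theta> a) \<phi> = rmult \<theta> \<phi> a}"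

end

theory Submission
  imports Defs
begin

text \<open>Evaluating the condition \<open>(\<rho> a) \<phi> = \<phi> a\<close> on a single monomial \<open>U\<^sub>1\<^sup>p U\<^sub>2\<^sup>q\<close> shows that
  \<open>\<phi>\<close> is unchanged when \<open>(n, m)\<close> moves along an antidiagonal and is multiplied by an explicit
  power of \<open>\<lambda>\<close> when the total degree \<open>n + m\<close> grows by \<open>2p\<close>; conversely this shift law is
  sufficient, by linearity. So \<open>\<phi>\<close> is a function of \<open>n + m\<close> alone, fixed by its values at
  degrees 0 and 1, and the quadratic exponent is the unique solution of the shift law.\<close>

lemma lam_add: "lam \<theta> (a + b) = lam \<theta> a * lam \<theta> b"
  unfolding lam_def by (simp add: cis_mult distrib_left)

lemma lam_zero [simp]: "lam \<theta> 0 = 1"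
  unfolding lam_def by simp

lemma lam_nonzero [simp]: "lam \<theta> x \<noteq> 0"
  unfolding lam_def by simp

definition monomial :: "int \<Rightarrow> int \<Rightarrow> coeffs" where
  "monomial p q = (\<lambda>i j. if i = p \<and> j = q then 1 else 0)"

lemma supp2_monomial: "supp2 (monomial p q) = {(p, q)}"
  unfolding supp2_def monomial_def by auto

lemma is_alg_monomial: "is_alg (monomial p q)"
  unfolding is_alg_def supp2_monomial by simp

lemma supp2_rho: "supp2 (rho \<theta> a) = (\<lambda>(p, q). (q, - p)) ` supp2 a"
  unfolding supp2_def rho_def by (force simp: image_iff)

lemma H0_rho_shift:
  assumes "\<phi> \<in> H0_rho \<theta>"
  shows "\<phi> (i + p - q) (j + p + q) = lam \<theta> (of_int (p * (i + j + p))) * \<phi> i j"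
proof -
  let ?N = "i + p" and ?M = "j + q"
  have "lmult \<theta> (rho \<theta> (monomial p q)) \<phi> ?N ?M = rmult \<theta> \<phi> (monomial p q) ?N ?M"
    using assms is_alg_monomial unfolding H0_rho_def by auto
  then have "lam \<theta> (of_int (- p * q)) * lam \<theta> (of_int (- p * (i + p - q))) * \<phi> (i + p - q) (j + q + p)
      = \<phi> i j * lam \<theta> (of_int (j * p))"
    unfolding lmult_def rmult_def supp2_rho supp2_monomial
    by (simp add: rho_def monomial_def)
  moreover have "lam \<theta> (of_int (p * (i + j + p))) * (lam \<theta> (of_int (- p * q)) * lam \<theta> (of_int (- p * (i + p - q))))
      = lam \<theta> (of_int (j * p))"
    unfolding lam_add [symmetric] by (simp add: algebra_simps)
  ultimately have "(lam \<theta> (of_int (- p * q)) * lam \<theta> (of_int (- p * (i + p - q)))) * \<phi> (i + p - q) (j + q + p)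
      = (lam \<theta> (of_int (- p * q)) * lam \<theta> (of_int (- p * (i + p - q)))) * (lam \<theta> (of_int (p * (i + j + p))) * \<phi> i j)"
    by (simp add: mult_ac)
  then show ?thesis
    by (simp add: add.commute add.left_commute)
qed

lemma H0_rho_if_shift:
  assumes shift: "\<And>i j p q. \<phi> (i + p - q) (j + p + q) = lam \<theta> (of_int (p * (i + j + p))) * \<phi> i j"
  shows "\<phi> \<in> H0_rho \<theta>"
proof -
  have "lmult \<theta> (rho \<theta> a) \<phi> N M = rmult \<theta> \<phi> a N M" for a N M
  proof -
    have inj: "inj_on (\<lambda>(p, q). (q, - p)) (supp2 a)"
      by (auto simp: inj_on_def)
    have "lmult \<theta> (rho \<theta> a) \<phi> N M = (\<Sum>(p, q)\<in>supp2 a.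
        rho \<theta> a q (- p) * lam \<theta> (of_int (- p * (N - q))) * \<phi> (N - q) (M + p))"
      unfolding lmult_def supp2_rho sum.reindex [OF inj] by (simp add: case_prod_unfold)
    also have "\<dots> = (\<Sum>(p, q)\<in>supp2 a. \<phi> (N - p) (M - q) * a p q * lam \<theta> (of_int ((M - q) * p)))"
    proof (rule sum.cong, simp, clarify)
      fix p q
      have "\<phi> (N - q) (M + p) = lam \<theta> (of_int (p * (N + M - q))) * \<phi> (N - p) (M - q)"
        using shift [where i = "N - p" and j = "M - q" and p = p and q = q] by (simp add: algebra_simps)
      moreover have "lam \<theta> (of_int (- p * q)) * lam \<theta> (of_int (- p * (N - q))) * lam \<theta> (of_int (p * (N + M - q)))
          = lam \<theta> (of_int ((M - q) * p))"
        unfolding lam_add [symmetric] by (simp add: algebra_simps)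
      ultimately show "rho \<theta> a q (- p) * lam \<theta> (of_int (- p * (N - q))) * \<phi> (N - q) (M + p)
          = \<phi> (N - p) (M - q) * a p q * lam \<theta> (of_int ((M - q) * p))"
        unfolding rho_def by (simp add: mult_ac)
    qed
    also have "\<dots> = rmult \<theta> \<phi> a N M"
      unfolding rmult_def by simp
    finally show ?thesis .
  qed
  then show ?thesis
    unfolding H0_rho_def by (simp add: fun_eq_iff)
qed

lemma H0_rho_depends_on_degree:
  assumes "\<phi> \<in> H0_rho \<theta>"
  shows "\<phi> n m = \<phi> 0 (n + m)"
  using H0_rho_shift [OF assms, where i = 0 and j = "n + m" and p = 0 and q = "- n"] by simp

lemma H0_rho_degree_shift:
  assumes "\<phi> \<in> H0_rho \<theta>"
  shows "\<phi> 0 (k + 2 * p) = lam \<theta> (of_int (p * (k + p))) * \<phi> 0 k"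
  using H0_rho_shift [OF assms, where i = 0 and j = k and p = p and q = p] by (simp add: algebra_simps)

definition degree_coeff :: "real \<Rightarrow> complex \<Rightarrow> complex \<Rightarrow> int \<Rightarrow> complex" where
  "degree_coeff \<theta> c0 c1 k =
    (if even k then lam \<theta> (of_int (k\<^sup>2) / 4) * c0 else lam \<theta> (of_int (k\<^sup>2 - 1) / 4) * c1)"

lemma degree_coeff_shift:
  "degree_coeff \<theta> c0 c1 (k + 2 * p) = lam \<theta> (of_int (p * (k + p))) * degree_coeff \<theta> c0 c1 k"
proof -
  have "lam \<theta> (of_int ((k + 2 * p)\<^sup>2 - e) / 4) = lam \<theta> (of_int (k\<^sup>2 - e) / 4) * lam \<theta> (of_int (p * (k + p)))"
    for e
  proof -
    have "(k + 2 * p)\<^sup>2 - e = (k\<^sup>2 - e) + 4 * (p * (k + p))"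
      by (simp add: power2_eq_square algebra_simps)
    then have "of_int ((k + 2 * p)\<^sup>2 - e) / 4 = of_int (k\<^sup>2 - e) / 4 + (of_int (p * (k + p)) :: real)"
      by (simp add: add_divide_distrib)
    then show ?thesis
      by (simp only: lam_add)
  qed
  from this [of 0] this [of 1] show ?thesis
    unfolding degree_coeff_def by simp
qed

lemma degree_coeff_0 [simp]: "degree_coeff \<theta> c0 c1 0 = c0"
  and degree_coeff_1 [simp]: "degree_coeff \<theta> c0 c1 1 = c1"
  unfolding degree_coeff_def by simp_all

lemma degree_coeff_unique:
  assumes shift: "\<And>k p. g (k + 2 * p) = lam \<theta> (of_int (p * (k + p))) * g k"
  shows "g k = degree_coeff \<theta> (g 0) (g 1) k"
proof -
  have "k mod 2 \<in> {0, 1}" and "k = k mod 2 + 2 * (k div 2)"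
    by (auto simp: not_mod_2_eq_0_eq_1)
  then show ?thesis
    using shift [of "k mod 2" "k div 2"] degree_coeff_shift [of \<theta> "g 0" "g 1" "k mod 2" "k div 2"]
    by auto
qed

lemma degree_coeff_in_H0_rho: "(\<lambda>n m. degree_coeff \<theta> c0 c1 (n + m)) \<in> H0_rho \<theta>"
proof (rule H0_rho_if_shift)
  fix i j p q :: int
  have "i + p - q + (j + p + q) = (i + j) + 2 * p" by simp
  then show "degree_coeff \<theta> c0 c1 (i + p - q + (j + p + q))
      = lam \<theta> (of_int (p * (i + j + p))) * degree_coeff \<theta> c0 c1 (i + j)"
    by (simp only: degree_coeff_shift)
qed

lemma H0_rho_eq_degree_coeff:
  assumes \<phi>: "\<phi> \<in> H0_rho \<theta>"
  shows "\<phi> n m = degree_coeff \<theta> (\<phi> 0 0) (\<phi> 0 1) (n + m)"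
proof -
  have "\<phi> n m = \<phi> 0 (n + m)"
    by (rule H0_rho_depends_on_degree [OF \<phi>])
  also have "\<dots> = degree_coeff \<theta> (\<phi> 0 0) (\<phi> 0 1) (n + m)"
    by (rule degree_coeff_unique) (rule H0_rho_degree_shift [OF \<phi>])
  finally show ?thesis .
qed

theorem mainTheorem5:
  fixes \<theta> :: real
  assumes "\<theta> \<notin> \<rat>"
  shows "(\<forall>c0 c1. \<exists>\<phi>\<in>H0_rho \<theta>. \<phi> 0 0 = c0 \<and> \<phi> 0 1 = c1)
    \<and> (\<forall>\<phi>\<in>H0_rho \<theta>. \<forall>n m :: int.
        (even (m + n) \<longrightarrow>
           \<phi> n m = lam \<theta> (of_int (m^2 + n^2 + 2*m*n) / 4) * \<phi> 0 0)
      \<and> (odd (m + n) \<longrightarrow>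
           \<phi> n m = lam \<theta> (of_int (m^2 + n^2 + 2*m*n - 1) / 4) * \<phi> 0 1))"
proof (intro conjI allI ballI)
  fix c0 c1
  show "\<exists>\<phi>\<in>H0_rho \<theta>. \<phi> 0 0 = c0 \<and> \<phi> 0 1 = c1"
    by (rule bexI [OF _ degree_coeff_in_H0_rho]) simp
next
  fix \<phi> and n m :: int
  assume \<phi>: "\<phi> \<in> H0_rho \<theta>"
  have "(n + m)\<^sup>2 = m\<^sup>2 + n\<^sup>2 + 2 * m * n"
    by (simp add: power2_eq_square algebra_simps)
  then show "even (m + n) \<longrightarrow> \<phi> n m = lam \<theta> (of_int (m^2 + n^2 + 2*m*n) / 4) * \<phi> 0 0"
    and "odd (m + n) \<longrightarrow> \<phi> n m = lam \<theta> (of_int (m^2 + n^2 + 2*m*n - 1) / 4) * \<phi> 0 1"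
    using H0_rho_eq_degree_coeff [OF \<phi>, of n m] by (simp_all add: degree_coeff_def add.commute)
qed

end
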